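(* For every real $x > 0$ and every natural number $n$, $\mathrm{LB}_{\ln}(x,n) \le \ln(x) \le \mathrm{UB}_{\ln}(x,n)$.
   Context: For $1 < x \le 2$ and natural $n$: \[\mathrm{LB}_{\ln}(x,n) = \sum_{i=1}^{2n}(-1)^{i+1}\frac{(x-1)^i}{i},\qquad \mathrm{UB}_{\ln}(x,n) = \sum_{i=1}^{2n+1}(-1)^{i+1}\frac{(x-1)^i}{i}.\] Further: $\mathrm{LB}_{\ln}(1,n)=\mathrm{UB}_{\ln}(1,n)=0$; for $0<x<1$: $\mathrm{LB}_{\ln}(x,n) = -\mathrm{UB}_{\ln}(1/x,n)$ and $\mathrm{UB}_{\ln}(x,n) = -\mathrm{LB}_{\ln}(1/x,n)$; for $x>2$: let $m$ be the natural number and $y$ the real with $x = 2^m y$ and $1 \le y < 2$ (equivalently $(m,y)=\mathrm{lnnat}(x,2)$, where $\mathrm{lnnat}(x,k)=(0,x)$ if $x<k$ and otherwise $(m'+1,y')$ with $(m',y')=\mathrm{lnnat}(x/k,k)$), and set $\mathrm{LB}_{\ln}(x,n) = m\,\mathrm{LB}_{\ln}(2,n) + \mathrm{LB}_{\ln}(y,n)$ and $\mathrm{UB}_{\ln}(x,n) = m\,\mathrm{UB}_{\ln}(2,n) + \mathrm{UB}_{\ln}(y,n)$. *)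

theory Defs
  imports Complex_Main
begin

definition lb_series :: "real \<Rightarrow> nat \<Rightarrow> real" where
  "lb_series x n = (\<Sum>i=1..2*n. (-1)^(i+1) * (x - 1)^i / real i)"

definition ub_series :: "real \<Rightarrow> nat \<Rightarrow> real" where
  "ub_series x n = (\<Sum>i=1..2*n+1. (-1)^(i+1) * (x - 1)^i / real i)"

definition ln_split :: "real \<Rightarrow> nat \<times> real" where
  "ln_split x = (THE (m, y). x = 2^m * y \<and> 1 \<le> y \<and> y < 2)"

definition LB_ln12 :: "real \<Rightarrow> nat \<Rightarrow> real" where
  "LB_ln12 x n = (if x = 1 then 0 else lb_series x n)"

definition UB_ln12 :: "real \<Rightarrow> nat \<Rightarrow> real" where
  "UB_ln12 x n = (if x = 1 then 0 else ub_series x n)"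

definition LB_ln_ge1 :: "real \<Rightarrow> nat \<Rightarrow> real" where
  "LB_ln_ge1 x n = (if x \<le> 2 then LB_ln12 x n
     else (case ln_split x of (m, y) \<Rightarrow> real m * LB_ln12 2 n + LB_ln12 y n))"

definition UB_ln_ge1 :: "real \<Rightarrow> nat \<Rightarrow> real" where
  "UB_ln_ge1 x n = (if x \<le> 2 then UB_ln12 x n
     else (case ln_split x of (m, y) \<Rightarrow> real m * UB_ln12 2 n + UB_ln12 y n))"

definition LB_ln :: "real \<Rightarrow> nat \<Rightarrow> real" where
  "LB_ln x n = (if x < 1 then - UB_ln_ge1 (1 / x) n else LB_ln_ge1 x n)"

definition UB_ln :: "real \<Rightarrow> nat \<Rightarrow> real" where
  "UB_ln x n = (if x < 1 then - LB_ln_ge1 (1 / x) n else UB_ln_ge1 x n)"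

end

theory Submission
  imports Defs
begin

text \<open>
  For \<open>t \<ge> 0\<close> the remainder \<open>r\<^sub>k(t) = ln (1 + t) - T\<^sub>k(t)\<close> of the Taylor polynomial of degree
  \<open>k\<close> vanishes at \<open>0\<close> and has derivative \<open>1/(1+t) - \<Sum>i<k. (-t)^i = (-t)^k/(1+t)\<close>, so
  \<open>(-1)^k r\<^sub>k\<close> is nondecreasing and hence nonnegative: even-degree partial sums bound \<open>ln\<close>
  from below, odd-degree ones from above, on \<open>[1, 2]\<close> and in fact on all of \<open>[1, \<infinity>)\<close>.
  For \<open>x > 2\<close> the bounds follow from \<open>ln x = m ln 2 + ln y\<close> with \<open>m \<ge> 0\<close>, and for
  \<open>x < 1\<close> from \<open>ln x = - ln (1/x)\<close>.
\<close>

definition ln_taylor :: "nat \<Rightarrow> real \<Rightarrow> real" where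
  "ln_taylor k t = (\<Sum>i<k. (-1)^i * t^Suc i / Suc i)"

lemma ln_taylor_has_real_derivative:
  "(ln_taylor k has_real_derivative (\<Sum>i<k. (-t)^i)) (at t)"
proof -
  have "((\<lambda>t. (-1)^i * t^Suc i / Suc i) has_real_derivative (-t)^i) (at t)" for i
  proof -
    have "(-1)^i * (real (Suc i) * t^(Suc i - Suc 0)) / real (Suc i) = (-t)^i"
      by (simp flip: power_mult_distrib)
    with DERIV_cdivide[OF DERIV_cmult[OF DERIV_pow]] show ?thesis
      by metis
  qed
  then show ?thesis
    unfolding ln_taylor_def[abs_def] by (rule DERIV_sum)
qed

lemma ln_taylor_remainder_alternating:
  fixes t :: real
  assumes "t \<ge> 0"
  shows "0 \<le> (-1)^k * (ln (1 + t) - ln_taylor k t)"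
proof -
  let ?r = "\<lambda>s. (-1)^k * (ln (1 + s) - ln_taylor k s)"
  have "?r 0 \<le> ?r t"
  proof (rule DERIV_nonneg_imp_nondecreasing[OF assms])
    fix s :: real
    assume "0 \<le> s" "s \<le> t"
    then have pos: "1 + s > 0" by simp
    have "(?r has_real_derivative (-1)^k * (1 / (1 + s) - (\<Sum>i<k. (-s)^i))) (at s)"
      using pos by (auto intro!: derivative_eq_intros ln_taylor_has_real_derivative)
    moreover have "(-1)^k * (1 / (1 + s) - (\<Sum>i<k. (-s)^i)) = s^k / (1 + s)"
    proof -
      have "(1 + s) * (\<Sum>i<k. (-s)^i) = 1 - (-s)^k"
        using one_diff_power_eq[of "-s" k] by simp
      then have "1 / (1 + s) - (\<Sum>i<k. (-s)^i) = (-s)^k / (1 + s)"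
        using pos by (simp add: field_simps)
      then show ?thesis
        by (simp flip: power_mult_distrib)
    qed
    ultimately show "\<exists>y. (?r has_real_derivative y) (at s) \<and> 0 \<le> y"
      using \<open>0 \<le> s\<close> by fastforce
  qed
  then show ?thesis
    by (simp add: ln_taylor_def)
qed

lemma ln_taylor_eq_sum_atLeast1: "ln_taylor k t = (\<Sum>i=1..k. (-1)^(i+1) * t^i / real i)"
  by (simp add: ln_taylor_def sum.atLeast1_atMost_eq)

lemma lb_series_eq_ln_taylor: "lb_series x n = ln_taylor (2 * n) (x - 1)"
  unfolding lb_series_def ln_taylor_eq_sum_atLeast1 ..

lemma ub_series_eq_ln_taylor: "ub_series x n = ln_taylor (2 * n + 1) (x - 1)"
  unfolding ub_series_def ln_taylor_eq_sum_atLeast1 ..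

lemma lb_series_le_ln:
  fixes x :: real
  assumes "1 \<le> x"
  shows "lb_series x n \<le> ln x"
  using ln_taylor_remainder_alternating[of "x - 1" "2 * n"] assms
  unfolding lb_series_eq_ln_taylor by simp

lemma ln_le_ub_series:
  fixes x :: real
  assumes "1 \<le> x"
  shows "ln x \<le> ub_series x n"
  using ln_taylor_remainder_alternating[of "x - 1" "2 * n + 1"] assms
  unfolding ub_series_eq_ln_taylor by simp

lemma LB_ln12_le_ln: "1 \<le> x \<Longrightarrow> LB_ln12 x n \<le> ln x"
  by (simp add: LB_ln12_def lb_series_le_ln)

lemma ln_le_UB_ln12: "1 \<le> x \<Longrightarrow> ln x \<le> UB_ln12 x n"
  by (simp add: UB_ln12_def ln_le_ub_series)

lemma nat_floor_log2_eq_iff: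
  fixes x :: real
  assumes "1 \<le> x"
  shows "nat \<lfloor>log 2 x\<rfloor> = m \<longleftrightarrow> 2^m \<le> x \<and> x < 2^Suc m"
proof -
  have "0 \<le> \<lfloor>log 2 x\<rfloor>"
    using assms by simp
  then have "nat \<lfloor>log 2 x\<rfloor> = m \<longleftrightarrow> \<lfloor>log 2 x\<rfloor> = int m"
    by auto
  also have "\<dots> \<longleftrightarrow> 2 powr real m \<le> x \<and> x < 2 powr real (Suc m)"
    using floor_log_eq_powr_iff[of x 2 "int m"] assms by (simp add: add.commute)
  also have "\<dots> \<longleftrightarrow> 2^m \<le> x \<and> x < 2^Suc m"
    by (simp only: powr_realpow zero_less_numeral)
  finally show ?thesis .
qed

lemma ln_split_eqI:
  fixes x y :: real
  assumes "x = 2^m * y" "1 \<le> y" "y < 2"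
  shows "ln_split x = (m, y)"
  unfolding ln_split_def
proof (rule the_equality)
  show "case (m, y) of (m, y) \<Rightarrow> x = 2^m * y \<and> 1 \<le> y \<and> y < 2"
    using assms by simp
next
  have "y \<le> x"
    using assms by (simp add: mult_le_cancel_right1)
  with assms(2) have "1 \<le> x"
    by linarith
  fix p
  assume "case p of (m', y') \<Rightarrow> x = 2^m' * y' \<and> 1 \<le> y' \<and> y' < 2"
  then obtain m' y' where p: "p = (m', y')" "x = 2^m' * y'" "1 \<le> y'" "y' < 2"
    by (cases p) auto
  have "nat \<lfloor>log 2 x\<rfloor> = m'"
    unfolding nat_floor_log2_eq_iff[OF \<open>1 \<le> x\<close>] using p(2-4) by simp
  moreover have "nat \<lfloor>log 2 x\<rfloor> = m"
    unfolding nat_floor_log2_eq_iff[OF \<open>1 \<le> x\<close>] using assms by simp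
  ultimately show "p = (m, y)"
    using assms p by simp
qed

lemma ln_split_exists:
  fixes x :: real
  assumes "1 \<le> x"
  obtains m y where "ln_split x = (m, y)" "x = 2^m * y" "1 \<le> y" "y < 2"
proof -
  define m where "m = nat \<lfloor>log 2 x\<rfloor>"
  have "2^m \<le> x" "x < 2^Suc m"
    using nat_floor_log2_eq_iff[OF assms] m_def by auto
  then have "x = 2^m * (x / 2^m)" "1 \<le> x / 2^m" "x / 2^m < 2"
    by (simp_all add: field_simps)
  then show ?thesis
    using that ln_split_eqI by blast
qed

lemma LB_ln_ge1_le_ln:
  fixes x :: real
  assumes "1 \<le> x"
  shows "LB_ln_ge1 x n \<le> ln x"
proof (cases "x \<le> 2")
  case True
  then show ?thesis
    using assms by (simp add: LB_ln_ge1_def LB_ln12_le_ln)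
next
  case False
  obtain m y where split: "ln_split x = (m, y)" "x = 2^m * y" "1 \<le> y" "y < 2"
    using ln_split_exists[OF assms] .
  have "LB_ln_ge1 x n = real m * LB_ln12 2 n + LB_ln12 y n"
    using False split(1) by (simp add: LB_ln_ge1_def)
  also have "\<dots> \<le> real m * ln 2 + ln y"
    using split(3) by (intro add_mono mult_left_mono LB_ln12_le_ln) simp_all
  also have "\<dots> = ln x"
    using split(2,3) by (simp add: ln_mult ln_realpow)
  finally show ?thesis .
qed

lemma ln_le_UB_ln_ge1:
  fixes x :: real
  assumes "1 \<le> x"
  shows "ln x \<le> UB_ln_ge1 x n"
proof (cases "x \<le> 2")
  case True
  then show ?thesis
    using assms by (simp add: UB_ln_ge1_def ln_le_UB_ln12)
next
  case False
  obtain m y where split: "ln_split x = (m, y)" "x = 2^m * y" "1 \<le> y" "y < 2"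
    using ln_split_exists[OF assms] .
  have "ln x = real m * ln 2 + ln y"
    using split(2,3) by (simp add: ln_mult ln_realpow)
  also have "\<dots> \<le> real m * UB_ln12 2 n + UB_ln12 y n"
    using split(3) by (intro add_mono mult_left_mono ln_le_UB_ln12) simp_all
  also have "\<dots> = UB_ln_ge1 x n"
    using False split(1) by (simp add: UB_ln_ge1_def)
  finally show ?thesis .
qed

theorem proposition8:
  fixes x :: real and n :: nat
  assumes "x > 0"
  shows "LB_ln x n \<le> ln x \<and> ln x \<le> UB_ln x n"
proof (cases "x < 1")
  case True
  then have "1 \<le> 1 / x" and "ln (1 / x) = - ln x"
    using assms by (simp_all add: ln_div)
  then show ?thesis
    using True LB_ln_ge1_le_ln[of "1 / x" n] ln_le_UB_ln_ge1[of "1 / x" n]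
    by (simp add: LB_ln_def UB_ln_def)
next
  case False
  then show ?thesis
    using LB_ln_ge1_le_ln[of x n] ln_le_UB_ln_ge1[of x n] by (simp add: LB_ln_def UB_ln_def)
qed

end
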